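(* Let $m\geq 2$ and let $\mathbf d=(d_1,d_2)$ be a nonzero pair of non-negative integers with $\langle\mathbf d,\mathbf d\rangle=d_1^2+d_2^2-md_1d_2\leq 0$ (so $d_1,d_2\geq1$). For $x\in[0,d_1]$ define $$c_{\mathbf d}(x)=\Bigl(mx+d_2-\sqrt{(mx-d_2)^2+4x(d_1-x)}\Bigr)/2.$$ Then for all $x\in[0,d_1]$ we have $\frac{d_2}{d_1}\,x\leq c_{\mathbf d}(x)\leq\min(mx,d_2)$.
   Context: The Euler form of $K(m)$ (two vertices, $m$ arrows from vertex $1$ to vertex $2$) is extended to $\mathbb R^2$ by $\langle(a_1,a_2),(b_1,b_2)\rangle=a_1b_1+a_2b_2-ma_1b_2$. For fixed $x\in[0,d_1]$, $c_{\mathbf d}(x)$ is the smaller of the two zeroes of the quadratic function $y\mapsto\langle(x,y),(d_1-x,d_2-y)\rangle$. *)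

theory Defs
  imports Complex_Main
begin

definition euler_form :: "nat \<Rightarrow> real \<times> real \<Rightarrow> real \<times> real \<Rightarrow> real" where
  "euler_form m a b = fst a * fst b + snd a * snd b - real m * fst a * snd b"

definition c_d :: "nat \<Rightarrow> nat \<times> nat \<Rightarrow> real \<Rightarrow> real" where
  "c_d m d x = (real m * x + real (snd d)
     - sqrt ((real m * x - real (snd d))^2 + 4 * x * (real (fst d) - x))) / 2"

end

theory Submission
  imports Defs
begin

text \<open>Write \<open>q(y) = \<langle>(x,y),(d\<^sub>1-x,d\<^sub>2-y)\<rangle>\<close>. Completing the square shows that the radicand
  of \<open>c\<^sub>d(x)\<close> equals \<open>(mx + d\<^sub>2 - 2y)\<^sup>2 + 4q(y)\<close>, so \<open>c\<^sub>d(x) \<le> y\<close> whenever \<open>q(y) \<ge> 0\<close>, and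
  \<open>y \<le> c\<^sub>d(x)\<close> whenever \<open>q(y) \<le> 0\<close> and \<open>2y \<le> mx + d\<^sub>2\<close>. Both \<open>y = mx\<close> and \<open>y = d\<^sub>2\<close> give
  \<open>q(y) = x(d\<^sub>1-x) \<ge> 0\<close>. For \<open>y = tx\<close> with \<open>t = d\<^sub>2/d\<^sub>1\<close>, bilinearity gives
  \<open>q(tx) = x(d\<^sub>1-x)\<langle>(1,t),(1,t)\<rangle> = x(d\<^sub>1-x)\<langle>d,d\<rangle>/d\<^sub>1\<^sup>2 \<le> 0\<close>.\<close>

lemma euler_form_scale:
  "euler_form m (a * u1, a * u2) (b * v1, b * v2) = a * b * euler_form m (u1, u2) (v1, v2)"
  by (simp add: euler_form_def algebra_simps)

lemma c_d_radicand_eq: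
  "(real m * x - real d2)\<^sup>2 + 4 * x * (real d1 - x)
     = (real m * x + real d2 - 2 * y)\<^sup>2 + 4 * euler_form m (x, y) (real d1 - x, real d2 - y)"
  by (simp add: euler_form_def power2_eq_square algebra_simps)

lemma c_d_le_if_euler_form_nonneg:
  assumes "0 \<le> euler_form m (x, y) (real d1 - x, real d2 - y)"
  shows "c_d m (d1, d2) x \<le> y"
proof -
  let ?R = "real m * x + real d2 - 2 * y"
  have "sqrt (?R\<^sup>2) \<le> sqrt ((real m * x - real d2)\<^sup>2 + 4 * x * (real d1 - x))"
    unfolding c_d_radicand_eq [where y = y] using assms by (intro real_sqrt_le_mono) simp
  then have "?R \<le> sqrt ((real m * x - real d2)\<^sup>2 + 4 * x * (real d1 - x))"
    by simp
  then show ?thesis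
    by (simp add: c_d_def)
qed

lemma c_d_ge_if_euler_form_nonpos:
  assumes "euler_form m (x, y) (real d1 - x, real d2 - y) \<le> 0"
    and "2 * y \<le> real m * x + real d2"
  shows "y \<le> c_d m (d1, d2) x"
proof -
  let ?R = "real m * x + real d2 - 2 * y"
  have "sqrt ((real m * x - real d2)\<^sup>2 + 4 * x * (real d1 - x)) \<le> sqrt (?R\<^sup>2)"
    unfolding c_d_radicand_eq [where y = y] using assms(1) by (intro real_sqrt_le_mono) simp
  then have "sqrt ((real m * x - real d2)\<^sup>2 + 4 * x * (real d1 - x)) \<le> ?R"
    using assms(2) by simp
  then show ?thesis
    by (simp add: c_d_def)
qed

lemma c_d_le_min:
  assumes "0 \<le> x" and "x \<le> real d1"
  shows "c_d m (d1, d2) x \<le> min (real m * x) (real d2)"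
proof -
  have "0 \<le> x * (real d1 - x)"
    using assms by simp
  then have "c_d m (d1, d2) x \<le> real m * x" and "c_d m (d1, d2) x \<le> real d2"
    by (auto intro!: c_d_le_if_euler_form_nonneg simp: euler_form_def algebra_simps)
  then show ?thesis
    by simp
qed

lemma c_d_ge_slope:
  assumes form: "euler_form m (real d1, real d2) (real d1, real d2) \<le> 0"
    and "0 < d1" and "0 \<le> x" and "x \<le> real d1"
  shows "real d2 / real d1 * x \<le> c_d m (d1, d2) x"
proof -
  define t where "t = real d2 / real d1"
  have d2_eq: "real d2 = real d1 * t"
    using \<open>0 < d1\<close> by (simp add: t_def)
  have "real d1 * real d1 * euler_form m (1, t) (1, t) \<le> 0"
    using form euler_form_scale [of m "real d1" 1 t "real d1" 1 t] by (simp add: d2_eq)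
  then have unit_form: "1 + t\<^sup>2 - real m * t \<le> 0"
    using \<open>0 < d1\<close> by (simp add: euler_form_def mult_le_0_iff power2_eq_square)
  have "0 \<le> t"
    by (simp add: t_def)
  have "t \<le> real m"
  proof -
    have "t * t < real m * t"
      using unit_form by (simp add: power2_eq_square)
    with \<open>0 \<le> t\<close> show ?thesis
      by (metis mult_right_mono not_le order.asym)
  qed
  then have "2 * (t * x) \<le> real m * x + real d2"
    using assms(3,4) \<open>0 \<le> t\<close> mult_right_mono [of t "real m" x] mult_left_mono [of x "real d1" t]
    by (simp add: d2_eq mult.commute)
  moreover have "euler_form m (x, t * x) (real d1 - x, real d2 - t * x) \<le> 0"
  proof -
    have "euler_form m (x, t * x) (real d1 - x, real d2 - t * x)
        = x * (real d1 - x) * euler_form m (1, t) (1, t)"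
      using euler_form_scale [of m x 1 t "real d1 - x" 1 t] by (simp add: d2_eq algebra_simps)
    also have "\<dots> \<le> 0"
      using assms(3,4) unit_form by (intro mult_nonneg_nonpos) (auto simp: euler_form_def power2_eq_square)
    finally show ?thesis .
  qed
  ultimately show ?thesis
    using c_d_ge_if_euler_form_nonpos by (simp add: t_def mult.commute)
qed

theorem lemma3p2:
  fixes m d1 d2 :: nat and x :: real
  assumes "m \<ge> 2"
    and "(d1, d2) \<noteq> (0, 0)"
    and "euler_form m (real d1, real d2) (real d1, real d2) \<le> 0"
    and "0 \<le> x" and "x \<le> real d1"
  shows "real d2 / real d1 * x \<le> c_d m (d1, d2) x
       \<and> c_d m (d1, d2) x \<le> min (real m * x) (real d2)"
proof -
  have "0 < d1"
  proof (rule ccontr)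
    assume "\<not> 0 < d1"
    then have "real d2 * real d2 \<le> 0"
      using assms(3) by (simp add: euler_form_def)
    then show False
      using assms(2) \<open>\<not> 0 < d1\<close> by (simp add: mult_le_0_iff)
  qed
  then show ?thesis
    using c_d_ge_slope c_d_le_min assms(3-5) by blast
qed

end
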